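(* Consider a Kijima type II repair model with deterministic degrees of repair $A_1=1$, $A_2=0$ (and arbitrary nonnegative $A_k$, $k\ge3$): virtual ages $V_0=0$, $V_k=A_k(V_{k-1}+X_k)$, where $X_1$ is uniformly distributed on $(0,1)$ (survival function $\overline G$) and, for each $k\ge1$, the conditional survival function of $X_{k+1}$ given $(X_1,\dots,X_k)$ is $z\mapsto\overline G(z\mid V_k)$. Let $N(t)=\max\{k:X_1+\dots+X_k\le t\}$ and let $T$ be exponential with mean $1$, independent of $(X_k)$. Then $X_1$ is IFR, $T$ is DFR, but $N(T)$ is not discrete DFR; specifically $$P(N(T)\ge 2)^2> P(N(T)\ge1)\,P(N(T)\ge3).$$
   Context: For $v\ge0$, $\overline G(z\mid v)=\overline G(v+z)/\overline G(v)$ if $\overline G(v)>0$ and $0$ otherwise. A survival function is IFR (resp. DFR) if $t\mapsto\overline G(z+t)/\overline G(t)$ is decreasing (resp. increasing) for every $z\ge0$. A $\{0,1,2,\dots\}$-valued $N$ is discrete DFR if $P(N\ge n+1)^2\le P(N\ge n)P(N\ge n+2)$ for all $n\ge0$. *)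

theory Defs
  imports "HOL-Probability.Probability"
begin

definition surv :: "'a measure \<Rightarrow> ('a \<Rightarrow> real) \<Rightarrow> real \<Rightarrow> real" where
  "surv M Y z = measure M {\<omega> \<in> space M. z < Y \<omega>}"

definition cond_surv :: "(real \<Rightarrow> real) \<Rightarrow> real \<Rightarrow> real \<Rightarrow> real" where
  "cond_surv Gb v z = (if Gb v > 0 then Gb (v + z) / Gb v else 0)"

definition IFR :: "(real \<Rightarrow> real) \<Rightarrow> bool" where
  "IFR Gb \<longleftrightarrow> (\<forall>z\<ge>0. \<forall>s t. 0 \<le> s \<longrightarrow> s \<le> t \<longrightarrow> cond_surv Gb t z \<le> cond_surv Gb s z)"

definition DFR :: "(real \<Rightarrow> real) \<Rightarrow> bool" where
  "DFR Gb \<longleftrightarrow> (\<forall>z\<ge>0. \<forall>s t. 0 \<le> s \<longrightarrow> s \<le> t \<longrightarrow> cond_surv Gb s z \<le> cond_surv Gb t z)"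

definition discrete_DFR :: "'a measure \<Rightarrow> ('a \<Rightarrow> enat) \<Rightarrow> bool" where
  "discrete_DFR M Nv \<longleftrightarrow> (\<forall>n::nat.
     (measure M {\<omega> \<in> space M. enat (n+1) \<le> Nv \<omega>})\<^sup>2 \<le>
       measure M {\<omega> \<in> space M. enat n \<le> Nv \<omega>} * measure M {\<omega> \<in> space M. enat (n+2) \<le> Nv \<omega>})"

fun virt_age :: "(nat \<Rightarrow> real) \<Rightarrow> (nat \<Rightarrow> 'a \<Rightarrow> real) \<Rightarrow> nat \<Rightarrow> 'a \<Rightarrow> real" where
  "virt_age A X 0 \<omega> = 0"
| "virt_age A X (Suc k) \<omega> = A (Suc k) * (virt_age A X k \<omega> + X (Suc k) \<omega>)"

definition count_proc :: "(nat \<Rightarrow> 'a \<Rightarrow> real) \<Rightarrow> real \<Rightarrow> 'a \<Rightarrow> enat" where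
  "count_proc X t \<omega> = Sup {enat k | k. (\<Sum>i\<in>{1..k}. X i \<omega>) \<le> t}"

end

theory Submission
  imports Defs
begin

(*
  Since T ~ Exp(1) is independent of the
  inter-arrival times, P(N(T) \<ge> n) = P(S_n \<le> T) = E exp(-S_n) with S_n = X_1 + ... + X_n.
  For the Kijima model with A_1 = 1, A_2 = 0 this gives
    p_1 = E exp(-X_1) = 1 - 1/e                (X_1 uniform on (0,1)),
    p_3 = p_1 p_2                              (V_2 = 0, so X_3 is a fresh uniform variable
                                                independent of (X_1, X_2)),
    p_2 \<ge> (7/6)/e                              (exp(-s) \<ge> (2 - s)/e, E X_1 = 1/2, E X_2 \<le> 1/3),
  and p_2^2 > p_1 p_3 reduces to p_2 > p_1^2, a numerical fact about e.
*)

section \<open>The uniform survival function\<close>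

definition unif_surv :: "real \<Rightarrow> real" where
  "unif_surv x = min 1 (max 0 (1 - x))"

lemma unif_surv_bounds: "0 \<le> unif_surv x" "unif_surv x \<le> 1"
  by (auto simp: unif_surv_def)

lemma unif_surv_measurable[measurable]: "unif_surv \<in> borel_measurable borel"
  unfolding unif_surv_def by measurable

text \<open>The uniform distribution has increasing failure rate: its residual lives
  (1 - t - z)/(1 - t) shrink as the age t grows.\<close>
lemma IFR_unif_surv: "IFR unif_surv"
  unfolding IFR_def
proof (intro allI impI)
  fix z s t :: real assume z: "0 \<le> z" and s: "0 \<le> s" and st: "s \<le> t"
  show "cond_surv unif_surv t z \<le> cond_surv unif_surv s z"
  proof (cases "t < 1")
    case False
    then have "unif_surv t = 0" by (simp add: unif_surv_def)
    moreover have "0 \<le> cond_surv unif_surv s z" by (simp add: cond_surv_def unif_surv_def)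
    ultimately show ?thesis by (simp add: cond_surv_def)
  next
    case True
    then have ages: "unif_surv t = 1 - t" "unif_surv s = 1 - s" using s st by (auto simp: unif_surv_def)
    have shifted: "unif_surv (t+z) = max 0 (1 - t - z)" "unif_surv (s+z) = max 0 (1 - s - z)"
      using s st z by (auto simp: unif_surv_def)
    show ?thesis
    proof (cases "1 - t - z \<le> 0")
      case True
      then show ?thesis using ages shifted \<open>t < 1\<close> st s z by (simp add: cond_surv_def)
    next
      case False
      have "(1 - t - z) / (1 - t) = 1 - z / (1 - t)" using \<open>t < 1\<close> by (simp add: field_simps)
      also have "\<dots> \<le> 1 - z / (1 - s)" using \<open>t < 1\<close> st z
        by (intro diff_left_mono divide_left_mono) auto
      also have "\<dots> = (1 - s - z) / (1 - s)" using \<open>t < 1\<close> st by (simp add: field_simps)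
      finally show ?thesis using ages shifted \<open>t < 1\<close> st s z False by (simp add: cond_surv_def)
    qed
  qed
qed

lemma cond_surv_unif_bounds: "0 \<le> cond_surv unif_surv x z" "0 \<le> z \<Longrightarrow> cond_surv unif_surv x z \<le> 1"
  by (auto simp: cond_surv_def unif_surv_def divide_le_eq min_def max_def)

lemma cond_surv_unif_measurable[measurable]: "(\<lambda>x. cond_surv unif_surv x z) \<in> borel_measurable borel"
  unfolding cond_surv_def by measurable

text \<open>A residual life of age x exceeds z with probability at most 1 - z, and only if x < 1 - z.
  This bounds the tail of the second inter-arrival time.\<close>
lemma cond_surv_unif_le:
  assumes "0 \<le> x" "0 \<le> z"
  shows "cond_surv unif_surv x z \<le> (1 - z) * indicator {..<1 - z} x"
proof (cases "x < 1")
  case True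
  then have age: "unif_surv x = 1 - x" using assms by (simp add: unif_surv_def)
  show ?thesis
  proof (cases "x < 1 - z")
    case True
    then have "unif_surv (x + z) = 1 - x - z" using assms by (simp add: unif_surv_def)
    moreover have "(1 - x - z) / (1 - x) \<le> 1 - z"
    proof -
      have "1 - x - z \<le> (1 - z) * (1 - x)" using assms by (simp add: algebra_simps)
      then show ?thesis using \<open>x < 1\<close> by (simp add: pos_divide_le_eq)
    qed
    ultimately show ?thesis using age True \<open>x < 1\<close> by (simp add: cond_surv_def)
  next
    case False
    then have "unif_surv (x + z) = 0" using assms by (simp add: unif_surv_def)
    then show ?thesis using age False \<open>x < 1\<close> by (simp add: cond_surv_def)
  qed
next
  case False
  then have "unif_surv x = 0" by (simp add: unif_surv_def)
  then show ?thesis using False assms by (simp add: cond_surv_def indicator_def)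
qed

text \<open>An exponential survival function is memoryless, hence DFR.\<close>
lemma DFR_exponential_surv:
  assumes exp_tail: "\<And>s. 0 \<le> s \<Longrightarrow> Gb s = exp (- s * l)"
  shows "DFR Gb"
  unfolding DFR_def
proof (intro allI impI)
  fix z s t :: real assume "0 \<le> z" "0 \<le> s" "s \<le> t"
  have memoryless: "cond_surv Gb x z = exp (- z * l)" if "0 \<le> x" for x
  proof -
    have "exp (- (x + z) * l) / exp (- x * l) = exp (- (x + z) * l - (- x * l))"
      by (rule exp_diff[symmetric])
    then show ?thesis using that \<open>0 \<le> z\<close> by (simp add: cond_surv_def exp_tail algebra_simps)
  qed
  show "cond_surv Gb s z \<le> cond_surv Gb t z"
    using memoryless[of s] memoryless[of t] \<open>0 \<le> s\<close> \<open>s \<le> t\<close> by simp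
qed

lemma count_proc_ge_iff:
  assumes nonneg: "\<And>i. 0 \<le> X i \<omega>" and n: "1 \<le> n"
  shows "enat n \<le> count_proc X t \<omega> \<longleftrightarrow> (\<Sum>i\<in>{1..n}. X i \<omega>) \<le> t"
proof
  assume "(\<Sum>i\<in>{1..n}. X i \<omega>) \<le> t"
  then show "enat n \<le> count_proc X t \<omega>" unfolding count_proc_def
    by (auto intro: Sup_upper)
next
  assume "enat n \<le> count_proc X t \<omega>"
  then have "enat (n - 1) < count_proc X t \<omega>" using n
    by (metis Suc_diff_le diff_Suc_1 enat_ord_simps(2) le_less_trans lessI order_le_less)
  then obtain k where k: "enat (n - 1) < enat k" "(\<Sum>i\<in>{1..k}. X i \<omega>) \<le> t"
    unfolding count_proc_def less_Sup_iff by auto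
  have "(\<Sum>i\<in>{1..n}. X i \<omega>) \<le> (\<Sum>i\<in>{1..k}. X i \<omega>)"
    using k(1) n nonneg by (intro sum_mono2) auto
  with k show "(\<Sum>i\<in>{1..n}. X i \<omega>) \<le> t" by linarith
qed

lemma nn_integral_exp_neg_atLeast:
  "(\<integral>\<^sup>+z. ennreal (exp (- z)) * indicator {a..} z \<partial>lborel) = ennreal (exp (- a))"
proof -
  have "((\<lambda>x::real. exp (- x)) \<longlongrightarrow> 0) at_top"
    by (rule filterlim_compose[OF exp_at_bot filterlim_uminus_at_bot_at_top])
  then have "((\<lambda>x::real. - exp (- x)) \<longlongrightarrow> 0) at_top"
    using tendsto_minus by fastforce
  then have "(\<integral>\<^sup>+z. ennreal (exp (- z)) * indicator {a..} z \<partial>lborel) = ennreal (0 - (- exp (- a)))"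
    by (intro nn_integral_FTC_atLeast) (auto intro!: derivative_eq_intros)
  then show ?thesis by simp
qed

text \<open>The numerical inequality behind the counterexample: (1 - 1/e)^2 < (7/6)/e,
  i.e. (e - 1)^2 < 7e/6, which holds since 2 \<le> e < 2.72.\<close>
lemma one_minus_exp_neg1_sq_lt: "(1 - exp (- 1::real))\<^sup>2 < 7 / 6 * exp (- 1)"
proof -
  define e where "e = exp (1::real)"
  have e_lower: "2 \<le> e" unfolding e_def using exp_ge_add_one_self[of 1] by simp
  have e_upper: "e < 272/100" unfolding e_def by (rule e_less_272)
  have inv_e: "exp (- 1::real) = 1 / e" unfolding e_def by (simp add: exp_minus field_simps)
  have "0 \<le> (e - 2) * (272/100 - e)" using e_lower e_upper by simp
  moreover have "(e - 2) * (272/100 - e) = e * (472/100) - 544/100 - e * e" by (simp add: field_simps)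
  moreover have "(e - 1)\<^sup>2 = e * e - 2 * e + 1" by (simp add: power2_eq_square algebra_simps)
  ultimately have "(e - 1)\<^sup>2 < 7/6 * e" using e_lower e_upper by linarith
  then have "(e - 1)\<^sup>2 / e\<^sup>2 < (7/6 * e) / e\<^sup>2" using e_lower by (intro divide_strict_right_mono) auto
  then show ?thesis unfolding inv_e using e_lower by (simp add: power2_eq_square field_simps)
qed

section \<open>Uniform and exponential random variables\<close>

context prob_space
begin

lemma uniform01_tail:
  fixes Y :: "'a \<Rightarrow> real"
  assumes [measurable]: "Y \<in> borel_measurable M"
    and unif: "distr M lborel Y = uniform_measure lborel {0<..<1}"
  shows "emeasure M {\<omega> \<in> space M. z < Y \<omega>} = ennreal (unif_surv z)"
proof -
  have "emeasure M {\<omega> \<in> space M. z < Y \<omega>} = emeasure (distr M lborel Y) {z<..}"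
    by (subst emeasure_distr) (auto intro!: arg_cong2[where f=emeasure])
  also have "\<dots> = emeasure lborel ({0<..<1} \<inter> {z<..}) / emeasure lborel {0<..<(1::real)}"
    unfolding unif by (rule emeasure_uniform_measure) auto
  also have "\<dots> = ennreal (unif_surv z)"
  proof (cases "z < 1")
    case True
    then have "{0<..<1} \<inter> {z<..} = {max 0 z<..<(1::real)}" by auto
    then show ?thesis using True by (simp add: unif_surv_def divide_ennreal_def)
  next
    case False
    then have "{0<..<1} \<inter> {z<..} = ({}::real set)" by auto
    then show ?thesis using False by (simp add: unif_surv_def)
  qed
  finally show ?thesis .
qed

lemma surv_uniform01:
  fixes Y :: "'a \<Rightarrow> real"
  assumes "Y \<in> borel_measurable M" and "distr M lborel Y = uniform_measure lborel {0<..<1}"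
  shows "surv M Y = unif_surv"
proof
  fix z
  show "surv M Y z = unif_surv z" unfolding surv_def
    using uniform01_tail[OF assms, of z] unif_surv_bounds[of z] by (simp add: emeasure_eq_measure)
qed

lemma uniform01_cdf:
  fixes Y :: "'a \<Rightarrow> real"
  assumes [measurable]: "Y \<in> borel_measurable M"
    and unif: "distr M lborel Y = uniform_measure lborel {0<..<1}"
  shows "emeasure M {\<omega> \<in> space M. Y \<omega> \<le> z} = ennreal (1 - unif_surv z)"
proof -
  have "prob {\<omega> \<in> space M. Y \<omega> \<le> z} = prob (space M - {\<omega> \<in> space M. z < Y \<omega>})"
    by (auto intro!: arg_cong[where f=prob])
  also have "\<dots> = 1 - unif_surv z" using uniform01_tail[OF assms, of z] unif_surv_bounds[of z]
    by (subst prob_compl) (auto simp: emeasure_eq_measure)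
  finally show ?thesis by (simp add: emeasure_eq_measure)
qed

lemma nn_integral_uniform01:
  fixes Y :: "'a \<Rightarrow> real"
  assumes [measurable]: "Y \<in> borel_measurable M"
    and unif: "distr M lborel Y = uniform_measure lborel {0<..<1}"
    and [measurable]: "f \<in> borel_measurable borel"
  shows "(\<integral>\<^sup>+\<omega>. f (Y \<omega>) \<partial>M) = (\<integral>\<^sup>+x. f x * indicator {0..1} x \<partial>lborel)"
proof -
  have "(\<integral>\<^sup>+\<omega>. f (Y \<omega>) \<partial>M) = (\<integral>\<^sup>+x. f x \<partial>distr M lborel Y)"
    by (subst nn_integral_distr) auto
  also have "\<dots> = (\<integral>\<^sup>+x. f x * indicator {0<..<1} x \<partial>lborel) / emeasure lborel {0<..<1::real}"
    unfolding unif by (rule nn_integral_uniform_measure) auto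
  also have "\<dots> = (\<integral>\<^sup>+x. f x * indicator {0<..<1} x \<partial>lborel)"
    by (simp add: divide_ennreal_def)
  also have "\<dots> = (\<integral>\<^sup>+x. f x * indicator {0..1} x \<partial>lborel)"
  proof -
    have "AE x in lborel. x \<noteq> 0 \<and> x \<noteq> 1"
      using AE_lborel_singleton[of 0] AE_lborel_singleton[of 1] by eventually_elim simp
    then show ?thesis by (intro nn_integral_cong_AE) (auto elim!: eventually_mono simp: indicator_def)
  qed
  finally show ?thesis .
qed

lemma uniform01_laplace:
  fixes Y :: "'a \<Rightarrow> real"
  assumes "Y \<in> borel_measurable M" and "distr M lborel Y = uniform_measure lborel {0<..<1}"
  shows "(\<integral>\<^sup>+\<omega>. ennreal (exp (- Y \<omega>)) \<partial>M) = ennreal (1 - exp (- 1))"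
proof -
  have "(\<integral>\<^sup>+\<omega>. ennreal (exp (- Y \<omega>)) \<partial>M) = (\<integral>\<^sup>+x. ennreal (exp (- x)) * indicator {0..1} x \<partial>lborel)"
    by (rule nn_integral_uniform01[OF assms]) auto
  also have "\<dots> = ennreal ((- exp (- 1)) - (- exp (- 0)))"
    by (rule nn_integral_FTC_Icc) (auto intro!: derivative_eq_intros)
  finally show ?thesis by simp
qed

lemma uniform01_mean:
  fixes Y :: "'a \<Rightarrow> real"
  assumes "Y \<in> borel_measurable M" and "distr M lborel Y = uniform_measure lborel {0<..<1}"
  shows "(\<integral>\<^sup>+\<omega>. ennreal (Y \<omega>) \<partial>M) = ennreal (1/2)"
proof -
  have "(\<integral>\<^sup>+\<omega>. ennreal (Y \<omega>) \<partial>M) = (\<integral>\<^sup>+x. ennreal x * indicator {0..1} x \<partial>lborel)"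
    by (rule nn_integral_uniform01[OF assms]) auto
  also have "\<dots> = ennreal (1\<^sup>2/2 - 0\<^sup>2/2)"
    by (rule nn_integral_FTC_Icc[where F="\<lambda>x. x\<^sup>2/2"]) (auto intro!: derivative_eq_intros)
  finally show ?thesis by simp
qed

text \<open>The closed tail of an Exp(1) variable (the library provides the open one).\<close>
lemma exponential1_tail_ge:
  assumes D: "distributed M lborel T (exponential_density 1)" and a: "0 \<le> a"
  shows "emeasure M {\<omega> \<in> space M. a \<le> T \<omega>} = ennreal (exp (- a))"
proof -
  have [measurable]: "T \<in> borel_measurable M" using distributed_measurable[OF D] by simp
  have "emeasure M {\<omega> \<in> space M. a \<le> T \<omega>} = emeasure (distr M lborel T) {a..}"
    by (subst emeasure_distr) (auto intro!: arg_cong2[where f=emeasure])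
  also have "\<dots> = (\<integral>\<^sup>+x. ennreal (exponential_density 1 x) * indicator {a..} x \<partial>lborel)"
    unfolding distributed_distr_eq_density[OF D] by (subst emeasure_density) auto
  also have "\<dots> = (\<integral>\<^sup>+x. ennreal (exp (- x)) * indicator {a..} x \<partial>lborel)"
    using a by (intro nn_integral_cong) (auto simp: exponential_density_def indicator_def)
  finally show ?thesis by (simp only: nn_integral_exp_neg_atLeast)
qed

section \<open>Independence of the exponential horizon\<close>

lemma distr_pair_indep:
  assumes Z[measurable]: "Z \<in> measurable M N" and T[measurable]: "T \<in> measurable M K"
    and indep: "\<forall>B \<in> sets K. \<forall>C \<in> sets N.
        measure M ({\<omega> \<in> space M. T \<omega> \<in> B} \<inter> {\<omega> \<in> space M. Z \<omega> \<in> C})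
        = measure M {\<omega> \<in> space M. T \<omega> \<in> B} * measure M {\<omega> \<in> space M. Z \<omega> \<in> C}"
  shows "distr M (N \<Otimes>\<^sub>M K) (\<lambda>\<omega>. (Z \<omega>, T \<omega>)) = distr M N Z \<Otimes>\<^sub>M distr M K T"
proof (rule pair_measure_eqI[symmetric])
  interpret DZ: prob_space "distr M N Z" by (rule prob_space_distr) simp
  interpret DT: prob_space "distr M K T" by (rule prob_space_distr) simp
  show "sigma_finite_measure (distr M N Z)" "sigma_finite_measure (distr M K T)"
    by unfold_locales
  show "sets (distr M N Z \<Otimes>\<^sub>M distr M K T) = sets (distr M (N \<Otimes>\<^sub>M K) (\<lambda>\<omega>. (Z \<omega>, T \<omega>)))"
    by (simp only: sets_distr) (intro sets_pair_measure_cong sets_distr)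
  fix C B assume "C \<in> sets (distr M N Z)" "B \<in> sets (distr M K T)"
  then have [measurable]: "C \<in> sets N" "B \<in> sets K" by auto
  have pre: "(\<lambda>\<omega>. (Z \<omega>, T \<omega>)) -` (C \<times> B) \<inter> space M
      = {\<omega> \<in> space M. T \<omega> \<in> B} \<inter> {\<omega> \<in> space M. Z \<omega> \<in> C}"
    "Z -` C \<inter> space M = {\<omega> \<in> space M. Z \<omega> \<in> C}" "T -` B \<inter> space M = {\<omega> \<in> space M. T \<omega> \<in> B}"
    by auto
  have "emeasure (distr M (N \<Otimes>\<^sub>M K) (\<lambda>\<omega>. (Z \<omega>, T \<omega>))) (C \<times> B)
      = ennreal (measure M {\<omega> \<in> space M. T \<omega> \<in> B} * measure M {\<omega> \<in> space M. Z \<omega> \<in> C})"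
    using indep pre by (subst emeasure_distr) (auto simp: emeasure_eq_measure)
  also have "\<dots> = emeasure (distr M N Z) C * emeasure (distr M K T) B"
    using pre by (simp add: emeasure_distr emeasure_eq_measure ennreal_mult mult.commute)
  finally show "emeasure (distr M N Z) C * emeasure (distr M K T) B
      = emeasure (distr M (N \<Otimes>\<^sub>M K) (\<lambda>\<omega>. (Z \<omega>, T \<omega>))) (C \<times> B)" ..
qed

lemma emeasure_indep_pair:
  assumes Z[measurable]: "Z \<in> measurable M N" and T[measurable]: "T \<in> measurable M K"
    and indep: "\<forall>B \<in> sets K. \<forall>C \<in> sets N.
        measure M ({\<omega> \<in> space M. T \<omega> \<in> B} \<inter> {\<omega> \<in> space M. Z \<omega> \<in> C})
        = measure M {\<omega> \<in> space M. T \<omega> \<in> B} * measure M {\<omega> \<in> space M. Z \<omega> \<in> C}"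
    and Q[measurable]: "Q \<in> sets (N \<Otimes>\<^sub>M K)"
  shows "emeasure M {\<omega> \<in> space M. (Z \<omega>, T \<omega>) \<in> Q}
    = (\<integral>\<^sup>+\<omega>. emeasure (distr M K T) (Pair (Z \<omega>) -` Q) \<partial>M)"
proof -
  interpret DT: prob_space "distr M K T" by (rule prob_space_distr) simp
  have "(\<lambda>\<omega>. (Z \<omega>, T \<omega>)) -` Q \<inter> space M = {\<omega> \<in> space M. (Z \<omega>, T \<omega>) \<in> Q}" by auto
  then have "emeasure M {\<omega> \<in> space M. (Z \<omega>, T \<omega>) \<in> Q}
      = emeasure (distr M (N \<Otimes>\<^sub>M K) (\<lambda>\<omega>. (Z \<omega>, T \<omega>))) Q"
    by (simp add: emeasure_distr)
  also have "\<dots> = emeasure (distr M N Z \<Otimes>\<^sub>M distr M K T) Q"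
    by (simp only: distr_pair_indep[OF Z T indep])
  also have "\<dots> = (\<integral>\<^sup>+z. emeasure (distr M K T) (Pair z -` Q) \<partial>distr M N Z)"
    by (intro DT.emeasure_pair_measure_alt) simp
  also have "\<dots> = (\<integral>\<^sup>+\<omega>. emeasure (distr M K T) (Pair (Z \<omega>) -` Q) \<partial>M)"
  proof -
    have "(\<lambda>z. emeasure (distr M K T) (Pair z -` Q)) \<in> borel_measurable N"
      using Q by (intro DT.measurable_emeasure_Pair) simp
    then show ?thesis by (subst nn_integral_distr) auto
  qed
  finally show ?thesis .
qed

lemma prob_le_indep_exponential:
  fixes T :: "'a \<Rightarrow> real" and X :: "nat \<Rightarrow> 'a \<Rightarrow> real"
  assumes X[measurable]: "\<And>k. X k \<in> borel_measurable M"
    and Texp: "distributed M lborel T (exponential_density 1)"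
    and indep: "\<forall>B \<in> sets borel. \<forall>C \<in> sets (PiM UNIV (\<lambda>_::nat. borel)).
        measure M ({\<omega> \<in> space M. T \<omega> \<in> B} \<inter> {\<omega> \<in> space M. (\<lambda>k. X k \<omega>) \<in> C})
        = measure M {\<omega> \<in> space M. T \<omega> \<in> B} * measure M {\<omega> \<in> space M. (\<lambda>k. X k \<omega>) \<in> C}"
    and f[measurable]: "f \<in> borel_measurable (PiM UNIV (\<lambda>_::nat. borel))"
    and f_nonneg: "\<And>\<omega>. \<omega> \<in> space M \<Longrightarrow> 0 \<le> f (\<lambda>k. X k \<omega>)"
  shows "emeasure M {\<omega> \<in> space M. f (\<lambda>k. X k \<omega>) \<le> T \<omega>}
    = (\<integral>\<^sup>+\<omega>. ennreal (exp (- f (\<lambda>k. X k \<omega>))) \<partial>M)"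
proof -
  define N where "N = PiM UNIV (\<lambda>_::nat. borel :: real measure)"
  define Z where "Z = (\<lambda>\<omega> k. X k \<omega>)"
  define Q where "Q = {p \<in> space (N \<Otimes>\<^sub>M borel). f (fst p) \<le> snd p}"
  have T[measurable]: "T \<in> borel_measurable M" using distributed_measurable[OF Texp] by simp
  have Z[measurable]: "Z \<in> measurable M N" unfolding Z_def N_def
    by (rule measurable_PiM_single') auto
  have indep_Z: "\<forall>B \<in> sets borel. \<forall>C \<in> sets N.
        measure M ({\<omega> \<in> space M. T \<omega> \<in> B} \<inter> {\<omega> \<in> space M. Z \<omega> \<in> C})
        = measure M {\<omega> \<in> space M. T \<omega> \<in> B} * measure M {\<omega> \<in> space M. Z \<omega> \<in> C}"
    using indep unfolding Z_def N_def .
  have [measurable]: "f \<in> borel_measurable N" unfolding N_def by simp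
  have Q[measurable]: "Q \<in> sets (N \<Otimes>\<^sub>M borel)" unfolding Q_def by measurable
  have slice: "emeasure (distr M borel T) (Pair (Z \<omega>) -` Q) = ennreal (exp (- f (Z \<omega>)))"
    if \<omega>: "\<omega> \<in> space M" for \<omega>
  proof -
    have "Pair (Z \<omega>) -` Q = {f (Z \<omega>)..}"
      using measurable_space[OF Z \<omega>] by (auto simp: Q_def space_pair_measure)
    moreover have "T -` {f (Z \<omega>)..} \<inter> space M = {\<omega>' \<in> space M. f (Z \<omega>) \<le> T \<omega>'}" by auto
    ultimately have "emeasure (distr M borel T) (Pair (Z \<omega>) -` Q)
        = emeasure M {\<omega>' \<in> space M. f (Z \<omega>) \<le> T \<omega>'}"
      by (simp add: emeasure_distr)
    also have "\<dots> = ennreal (exp (- f (Z \<omega>)))"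
      using f_nonneg[OF \<omega>] by (intro exponential1_tail_ge[OF Texp]) (simp add: Z_def)
    finally show ?thesis .
  qed
  have "{\<omega> \<in> space M. f (\<lambda>k. X k \<omega>) \<le> T \<omega>} = {\<omega> \<in> space M. (Z \<omega>, T \<omega>) \<in> Q}"
    using measurable_space[OF Z] by (auto simp: Q_def space_pair_measure Z_def)
  also have "emeasure M \<dots> = (\<integral>\<^sup>+\<omega>. emeasure (distr M borel T) (Pair (Z \<omega>) -` Q) \<partial>M)"
    by (rule emeasure_indep_pair[OF Z T indep_Z Q])
  also have "\<dots> = (\<integral>\<^sup>+\<omega>. ennreal (exp (- f (\<lambda>k. X k \<omega>))) \<partial>M)"
    using slice by (intro nn_integral_cong) (simp add: Z_def)
  finally show ?thesis .
qed

end

context sigma_finite_measure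
begin

lemma nn_integral_layer_cake:
  fixes W :: "'a \<Rightarrow> real"
  assumes [measurable]: "W \<in> borel_measurable M" and nonneg: "\<And>\<omega>. 0 \<le> W \<omega>"
  shows "(\<integral>\<^sup>+\<omega>. ennreal (W \<omega>) \<partial>M)
    = (\<integral>\<^sup>+z. indicator {0..} z * emeasure M {\<omega> \<in> space M. z < W \<omega>} \<partial>lborel)"
proof -
  interpret P: pair_sigma_finite M lborel
    by (simp add: pair_sigma_finite_def sigma_finite_measure_axioms lborel.sigma_finite_measure_axioms)
  let ?layer = "\<lambda>\<omega> z. indicator {0..} z * indicator {\<omega> \<in> space M. z < W \<omega>} \<omega> :: ennreal"
  have "ennreal (W \<omega>) = (\<integral>\<^sup>+z. ?layer \<omega> z \<partial>lborel)" if "\<omega> \<in> space M" for \<omega>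
  proof -
    have "(\<integral>\<^sup>+z. ?layer \<omega> z \<partial>lborel) = (\<integral>\<^sup>+z. indicator {0..<W \<omega>} z \<partial>lborel)"
      using that by (intro nn_integral_cong) (auto simp: indicator_def)
    then show ?thesis using nonneg[of \<omega>] by simp
  qed
  then have "(\<integral>\<^sup>+\<omega>. ennreal (W \<omega>) \<partial>M) = (\<integral>\<^sup>+\<omega>. (\<integral>\<^sup>+z. ?layer \<omega> z \<partial>lborel) \<partial>M)"
    by (intro nn_integral_cong) simp
  also have "\<dots> = (\<integral>\<^sup>+z. (\<integral>\<^sup>+\<omega>. ?layer \<omega> z \<partial>M) \<partial>lborel)"
    by (rule P.Fubini'[symmetric]) measurable
  also have "\<dots> = (\<integral>\<^sup>+z. indicator {0..} z * emeasure M {\<omega> \<in> space M. z < W \<omega>} \<partial>lborel)"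
    by (intro nn_integral_cong) (simp add: nn_integral_cmult)
  finally show ?thesis .
qed

text \<open>Writing exp(-W) = \<integral>_W^\<infinity> exp(-z) dz and swapping integrals:
  E[h exp(-W)] = \<integral> exp(-z) E[h; W \<le> z] dz.  This turns Laplace transforms into
  integrals of distribution functions.\<close>
lemma nn_integral_exp_neg_Fubini:
  fixes W :: "'a \<Rightarrow> real"
  assumes [measurable]: "W \<in> borel_measurable M" "h \<in> borel_measurable M"
  shows "(\<integral>\<^sup>+\<omega>. h \<omega> * ennreal (exp (- W \<omega>)) \<partial>M) =
    (\<integral>\<^sup>+z. ennreal (exp (- z)) * (\<integral>\<^sup>+\<omega>. h \<omega> * indicator {\<omega> \<in> space M. W \<omega> \<le> z} \<omega> \<partial>M) \<partial>lborel)"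
proof -
  interpret P: pair_sigma_finite M lborel
    by (simp add: pair_sigma_finite_def sigma_finite_measure_axioms lborel.sigma_finite_measure_axioms)
  let ?g = "\<lambda>\<omega> z. h \<omega> * ennreal (exp (- z)) * indicator {\<omega> \<in> space M. W \<omega> \<le> z} \<omega>"
  have "h \<omega> * ennreal (exp (- W \<omega>)) = (\<integral>\<^sup>+z. ?g \<omega> z \<partial>lborel)" if "\<omega> \<in> space M" for \<omega>
  proof -
    have "(\<integral>\<^sup>+z. ?g \<omega> z \<partial>lborel) = h \<omega> * (\<integral>\<^sup>+z. ennreal (exp (- z)) * indicator {W \<omega>..} z \<partial>lborel)"
      using that by (subst nn_integral_cmult[symmetric])
        (auto intro!: nn_integral_cong simp: indicator_def mult.assoc)
    then show ?thesis by (simp add: nn_integral_exp_neg_atLeast)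
  qed
  then have "(\<integral>\<^sup>+\<omega>. h \<omega> * ennreal (exp (- W \<omega>)) \<partial>M) = (\<integral>\<^sup>+\<omega>. (\<integral>\<^sup>+z. ?g \<omega> z \<partial>lborel) \<partial>M)"
    by (intro nn_integral_cong) simp
  also have "\<dots> = (\<integral>\<^sup>+z. (\<integral>\<^sup>+\<omega>. ?g \<omega> z \<partial>M) \<partial>lborel)"
    by (rule P.Fubini'[symmetric]) measurable
  also have "\<dots> = (\<integral>\<^sup>+z. ennreal (exp (- z)) * (\<integral>\<^sup>+\<omega>. h \<omega> * indicator {\<omega> \<in> space M. W \<omega> \<le> z} \<omega> \<partial>M) \<partial>lborel)"
    by (intro nn_integral_cong) (simp add: nn_integral_cmult[symmetric] mult_ac)
  finally show ?thesis .
qed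

end

lemma nn_integral_indicator_factor:
  assumes Y[measurable]: "Y \<in> measurable M N" and E[measurable]: "E \<in> sets M"
    and split: "\<And>B. B \<in> sets N \<Longrightarrow>
      emeasure M (E \<inter> {\<omega> \<in> space M. Y \<omega> \<in> B}) = c * emeasure M {\<omega> \<in> space M. Y \<omega> \<in> B}"
    and \<phi>[measurable]: "\<phi> \<in> borel_measurable N"
  shows "(\<integral>\<^sup>+\<omega>. \<phi> (Y \<omega>) * indicator E \<omega> \<partial>M) = c * (\<integral>\<^sup>+\<omega>. \<phi> (Y \<omega>) \<partial>M)"
proof -
  have Y_dens: "Y \<in> measurable (density M (indicator E)) N"
    by (simp add: measurable_cong_sets[OF sets_density refl])
  have distr_eq: "distr (density M (indicator E)) N Y = density (distr M N Y) (\<lambda>_. c)"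
  proof (rule measure_eqI)
    fix B assume "B \<in> sets (distr (density M (indicator E)) N Y)"
    then have B[measurable]: "B \<in> sets N" by simp
    have pre: "Y -` B \<inter> space M = {\<omega> \<in> space M. Y \<omega> \<in> B}" by auto
    have EB: "E \<inter> {\<omega> \<in> space M. Y \<omega> \<in> B} \<in> sets M" by measurable
    have "emeasure (distr (density M (indicator E)) N Y) B
        = (\<integral>\<^sup>+\<omega>. indicator E \<omega> * indicator {\<omega> \<in> space M. Y \<omega> \<in> B} \<omega> \<partial>M)"
      using pre by (simp add: emeasure_distr[OF Y_dens B] emeasure_density)
    also have "\<dots> = emeasure M (E \<inter> {\<omega> \<in> space M. Y \<omega> \<in> B})"
      by (simp only: indicator_inter_arith[symmetric] nn_integral_indicator[OF EB])
    also have "\<dots> = emeasure (density (distr M N Y) (\<lambda>_. c)) B"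
      using pre by (simp add: split emeasure_density nn_integral_cmult_indicator emeasure_distr)
    finally show "emeasure (distr (density M (indicator E)) N Y) B
        = emeasure (density (distr M N Y) (\<lambda>_. c)) B" .
  qed simp
  have "(\<integral>\<^sup>+\<omega>. \<phi> (Y \<omega>) * indicator E \<omega> \<partial>M) = (\<integral>\<^sup>+\<omega>. \<phi> (Y \<omega>) \<partial>density M (indicator E))"
    by (subst nn_integral_density) (auto simp: mult.commute)
  also have "\<dots> = (\<integral>\<^sup>+y. \<phi> y \<partial>distr (density M (indicator E)) N Y)"
    by (rule nn_integral_distr[symmetric, OF Y_dens]) simp
  also have "\<dots> = (\<integral>\<^sup>+y. c * \<phi> y \<partial>distr M N Y)"
    unfolding distr_eq by (subst nn_integral_density) auto
  also have "\<dots> = c * (\<integral>\<^sup>+\<omega>. \<phi> (Y \<omega>) \<partial>M)"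
    by (simp add: nn_integral_cmult nn_integral_distr)
  finally show ?thesis .
qed

section \<open>The Kijima type II model with A_1 = 1 and A_2 = 0\<close>

locale kijima_counterexample = prob_space M for M :: "'a measure" +
  fixes X :: "nat \<Rightarrow> 'a \<Rightarrow> real" and A :: "nat \<Rightarrow> real" and T :: "'a \<Rightarrow> real"
  assumes A1: "A 1 = 1" and A2: "A 2 = 0"
    and X_measurable[measurable]: "\<And>k. X k \<in> borel_measurable M"
    and X_nonneg: "\<And>k \<omega>. 0 \<le> X k \<omega>"
    and X1_unif: "distr M lborel (X 1) = uniform_measure lborel {0<..<1}"
    and X_cond: "\<forall>k\<ge>1. \<forall>z\<ge>0. \<forall>B \<in> sets (PiM {1..k} (\<lambda>_. borel)).
        measure M ({\<omega> \<in> space M. z < X (Suc k) \<omega>} \<inter>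
                   {\<omega> \<in> space M. (\<lambda>i\<in>{1..k}. X i \<omega>) \<in> B})
        = integral\<^sup>L M (\<lambda>\<omega>. indicator {\<omega> \<in> space M. (\<lambda>i\<in>{1..k}. X i \<omega>) \<in> B} \<omega>
                            * cond_surv (surv M (X 1)) (virt_age A X k \<omega>) z)"
    and T_exp: "distributed M lborel T (exponential_density 1)"
    and T_indep: "\<forall>B \<in> sets borel. \<forall>C \<in> sets (PiM UNIV (\<lambda>_::nat. borel)).
        measure M ({\<omega> \<in> space M. T \<omega> \<in> B} \<inter> {\<omega> \<in> space M. (\<lambda>k. X k \<omega>) \<in> C})
        = measure M {\<omega> \<in> space M. T \<omega> \<in> B} * measure M {\<omega> \<in> space M. (\<lambda>k. X k \<omega>) \<in> C}"
begin

abbreviation tail_prob :: "nat \<Rightarrow> real" where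
  "tail_prob n \<equiv> prob {\<omega> \<in> space M. enat n \<le> count_proc X (T \<omega>) \<omega>}"

lemma surv_X1: "surv M (X 1) = unif_surv"
  by (rule surv_uniform01[OF X_measurable X1_unif])

lemma IFR_X1: "IFR (surv M (X 1))"
  unfolding surv_X1 by (rule IFR_unif_surv)

lemma DFR_T: "DFR (surv M T)"
proof (rule DFR_exponential_surv)
  fix s :: real assume "0 \<le> s"
  then show "surv M T s = exp (- s * 1)"
    using exponential_distributedD_gt[OF T_exp _ zero_less_one] unfolding surv_def by simp
qed

lemma tail_prob_laplace:
  assumes "1 \<le> n"
  shows "ennreal (tail_prob n) = (\<integral>\<^sup>+\<omega>. ennreal (exp (- (\<Sum>i\<in>{1..n}. X i \<omega>))) \<partial>M)"
proof -
  have "{\<omega> \<in> space M. enat n \<le> count_proc X (T \<omega>) \<omega>} = {\<omega> \<in> space M. (\<Sum>i\<in>{1..n}. X i \<omega>) \<le> T \<omega>}"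
    using count_proc_ge_iff[where X=X and n=n, OF X_nonneg assms] by auto
  moreover have "(\<lambda>x::nat \<Rightarrow> real. \<Sum>i\<in>{1..n}. x i) \<in> borel_measurable (PiM UNIV (\<lambda>_. borel))"
    by measurable
  ultimately show ?thesis
    using prob_le_indep_exponential[OF X_measurable T_exp T_indep, of "\<lambda>x. \<Sum>i\<in>{1..n}. x i"]
    by (simp add: emeasure_eq_measure[symmetric] X_nonneg sum_nonneg)
qed

lemma virt_age_1: "virt_age A X 1 \<omega> = X 1 \<omega>"
  using A1 by (simp add: One_nat_def)

text \<open>The second repair is perfect, so the system is as good as new after two failures.\<close>
lemma virt_age_2: "virt_age A X 2 \<omega> = 0"
  using A2 by (simp add: numeral_2_eq_2)

text \<open>The conditional-survival hypothesis for k = 1, where V_1 = X_1 and B is the whole space.\<close>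
lemma tail_X2_eq: "0 \<le> z \<Longrightarrow> prob {\<omega> \<in> space M. z < X 2 \<omega>} = (\<integral>\<omega>. cond_surv unif_surv (X 1 \<omega>) z \<partial>M)"
proof -
  assume z: "0 \<le> z"
  define B where "B = space (PiM {1..1::nat} (\<lambda>_. borel :: real measure))"
  have B: "B \<in> sets (PiM {1..1::nat} (\<lambda>_. borel :: real measure))" unfolding B_def by simp
  have everything: "{\<omega> \<in> space M. (\<lambda>i\<in>{1..1::nat}. X i \<omega>) \<in> B} = space M"
    unfolding B_def by (auto simp: space_PiM)
  have "prob ({\<omega> \<in> space M. z < X (Suc 1) \<omega>} \<inter> {\<omega> \<in> space M. (\<lambda>i\<in>{1..1}. X i \<omega>) \<in> B})
        = (\<integral>\<omega>. indicator {\<omega> \<in> space M. (\<lambda>i\<in>{1..1}. X i \<omega>) \<in> B} \<omega>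
               * cond_surv (surv M (X 1)) (virt_age A X 1 \<omega>) z \<partial>M)"
    using X_cond z B by blast
  also have "\<dots> = (\<integral>\<omega>. cond_surv unif_surv (X 1 \<omega>) z \<partial>M)"
    unfolding everything surv_X1 virt_age_1 by (intro Bochner_Integration.integral_cong) auto
  finally show ?thesis unfolding everything by (simp add: Int_absorb2 numeral_2_eq_2 del: One_nat_def)
qed

text \<open>P(X_2 > z) \<le> (1 - z)^2 on [0,1]: a residual life beyond z needs X_1 < 1 - z.\<close>
lemma tail_X2_le:
  assumes z: "0 \<le> z"
  shows "prob {\<omega> \<in> space M. z < X 2 \<omega>} \<le> (1 - z)\<^sup>2 * indicator {0..1} z"
proof -
  have "integrable M (\<lambda>\<omega>. cond_surv unif_surv (X 1 \<omega>) z)"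
    by (rule integrable_const_bound[where B=1]) (use z cond_surv_unif_bounds in auto)
  moreover have "integrable M (\<lambda>\<omega>. (1 - z) * indicator {\<omega> \<in> space M. X 1 \<omega> < 1 - z} \<omega>)"
    by (intro integrable_mult_right integrable_indicator) (simp_all add: emeasure_eq_measure)
  ultimately have "prob {\<omega> \<in> space M. z < X 2 \<omega>}
      \<le> (\<integral>\<omega>. (1 - z) * indicator {\<omega> \<in> space M. X 1 \<omega> < 1 - z} \<omega> \<partial>M)"
    unfolding tail_X2_eq[OF z] using cond_surv_unif_le[OF X_nonneg z]
    by (intro integral_mono) (auto simp: indicator_def)
  also have "\<dots> = (1 - z) * prob {\<omega> \<in> space M. X 1 \<omega> < 1 - z}"
    by simp
  also have "\<dots> \<le> (1 - z)\<^sup>2 * indicator {0..1} z"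
  proof (cases "z \<le> 1")
    case True
    have "prob {\<omega> \<in> space M. X 1 \<omega> < 1 - z} \<le> prob {\<omega> \<in> space M. X 1 \<omega> \<le> 1 - z}"
      by (intro finite_measure_mono) auto
    also have "\<dots> = 1 - z"
      using uniform01_cdf[OF X_measurable X1_unif, of "1 - z"] unif_surv_bounds[of "1 - z"] True z
      by (simp add: emeasure_eq_measure unif_surv_def)
    finally show ?thesis using True z by (simp add: power2_eq_square mult_left_mono)
  next
    case False
    then have "\<not> X 1 \<omega> < 1 - z" for \<omega> using X_nonneg[of 1 \<omega>] by linarith
    then have "{\<omega> \<in> space M. X 1 \<omega> < 1 - z} = {}" by blast
    then show ?thesis using False by (simp only:) simp
  qed
  finally show ?thesis .
qed

text \<open>Integrating the tail bound: E X_2 \<le> \<integral>_0^1 (1 - z)^2 dz = 1/3.\<close>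
lemma mean_X2_le: "(\<integral>\<^sup>+\<omega>. ennreal (X 2 \<omega>) \<partial>M) \<le> ennreal (1/3)"
proof -
  have "(\<integral>\<^sup>+\<omega>. ennreal (X 2 \<omega>) \<partial>M)
      = (\<integral>\<^sup>+z. indicator {0..} z * emeasure M {\<omega> \<in> space M. z < X 2 \<omega>} \<partial>lborel)"
    by (rule nn_integral_layer_cake) (auto simp: X_nonneg)
  also have "\<dots> \<le> (\<integral>\<^sup>+z. ennreal ((1 - z)\<^sup>2) * indicator {0..1} z \<partial>lborel)"
  proof (intro nn_integral_mono)
    fix z :: real
    show "indicator {0..} z * emeasure M {\<omega> \<in> space M. z < X 2 \<omega>} \<le> ennreal ((1 - z)\<^sup>2) * indicator {0..1} z"
    proof (cases "1 < z")
      case True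
      then have "prob {\<omega> \<in> space M. z < X 2 \<omega>} \<le> 0" using tail_X2_le[of z] by simp
      then have "prob {\<omega> \<in> space M. z < X 2 \<omega>} = 0" by (simp add: antisym)
      then show ?thesis by (simp add: emeasure_eq_measure)
    next
      case False
      then show ?thesis using tail_X2_le[of z]
        by (cases "0 \<le> z") (auto simp: emeasure_eq_measure indicator_def ennreal_leI)
    qed
  qed
  also have "\<dots> = ennreal ((\<lambda>z::real. - ((1 - z)^3) / 3) 1 - (\<lambda>z::real. - ((1 - z)^3) / 3) 0)"
  proof (rule nn_integral_FTC_Icc[where F="\<lambda>z. - ((1 - z)^3) / 3"])
    fix z :: real
    show "DERIV (\<lambda>z. - ((1 - z)^3) / 3) z :> (1 - z)\<^sup>2"
      by (auto intro!: derivative_eq_intros simp: power2_eq_square field_simps)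
  qed auto
  finally show ?thesis by simp
qed

text \<open>Since V_2 = 0, X_3 is uniform and independent of (X_1, X_2).\<close>
lemma X3_indep_events:
  assumes B: "B \<in> sets (PiM {1..2::nat} (\<lambda>_. borel :: real measure))"
  shows "emeasure M ({\<omega> \<in> space M. X 3 \<omega> \<le> z} \<inter> {\<omega> \<in> space M. (\<lambda>i\<in>{1..2}. X i \<omega>) \<in> B})
     = ennreal (1 - unif_surv z) * emeasure M {\<omega> \<in> space M. (\<lambda>i\<in>{1..2}. X i \<omega>) \<in> B}"
proof (cases "0 \<le> z")
  case False
  then have "\<not> X 3 \<omega> \<le> z" for \<omega> using X_nonneg[of 3 \<omega>] by linarith
  then have "{\<omega> \<in> space M. X 3 \<omega> \<le> z} = {}" by blast
  moreover have "unif_surv z = 1" using False by (simp add: unif_surv_def)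
  ultimately show ?thesis by (simp only: Int_empty_left emeasure_empty) simp
next
  case True
  define YB where "YB = {\<omega> \<in> space M. (\<lambda>i\<in>{1..2::nat}. X i \<omega>) \<in> B}"
  have YB[measurable]: "YB \<in> sets M" unfolding YB_def using B by measurable
  have "prob ({\<omega> \<in> space M. z < X (Suc 2) \<omega>} \<inter> YB)
        = (\<integral>\<omega>. indicator YB \<omega> * cond_surv (surv M (X 1)) (virt_age A X 2 \<omega>) z \<partial>M)"
    using X_cond[rule_format, OF _ True B] unfolding YB_def by simp
  also have "\<dots> = (\<integral>\<omega>. unif_surv z * indicator YB \<omega> \<partial>M)"
    unfolding surv_X1 virt_age_2
    by (intro Bochner_Integration.integral_cong) (auto simp: cond_surv_def unif_surv_def)
  finally have survive: "prob ({\<omega> \<in> space M. z < X 3 \<omega>} \<inter> YB) = unif_surv z * prob YB"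
    by (simp add: numeral_3_eq_3)
  have "{\<omega> \<in> space M. X 3 \<omega> \<le> z} \<inter> YB = YB - ({\<omega> \<in> space M. z < X 3 \<omega>} \<inter> YB)"
    using sets.sets_into_space[OF YB] by auto
  then have "prob ({\<omega> \<in> space M. X 3 \<omega> \<le> z} \<inter> YB) = (1 - unif_surv z) * prob YB"
    using survive by (simp add: finite_measure_Diff algebra_simps)
  then show ?thesis unfolding YB_def[symmetric]
    using unif_surv_bounds[of z] by (simp add: emeasure_eq_measure ennreal_mult)
qed

lemma X3_indep_laplace:
  "(\<integral>\<^sup>+\<omega>. ennreal (exp (- (X 1 \<omega> + X 2 \<omega>))) * indicator {\<omega> \<in> space M. X 3 \<omega> \<le> z} \<omega> \<partial>M)
    = ennreal (1 - unif_surv z) * (\<integral>\<^sup>+\<omega>. ennreal (exp (- (X 1 \<omega> + X 2 \<omega>))) \<partial>M)"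
proof -
  define Y where "Y = (\<lambda>\<omega>. \<lambda>i\<in>{1..2::nat}. X i \<omega>)"
  define \<phi> where "\<phi> = (\<lambda>y::nat \<Rightarrow> real. ennreal (exp (- (y 1 + y 2))))"
  have "(\<integral>\<^sup>+\<omega>. \<phi> (Y \<omega>) * indicator {\<omega> \<in> space M. X 3 \<omega> \<le> z} \<omega> \<partial>M)
      = ennreal (1 - unif_surv z) * (\<integral>\<^sup>+\<omega>. \<phi> (Y \<omega>) \<partial>M)"
  proof (rule nn_integral_indicator_factor[where N="PiM {1..2::nat} (\<lambda>_. borel :: real measure)"])
    show "Y \<in> measurable M (PiM {1..2::nat} (\<lambda>_. borel))" unfolding Y_def by measurable
    show "\<phi> \<in> borel_measurable (PiM {1..2::nat} (\<lambda>_. borel))" unfolding \<phi>_def by measurable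
    show "{\<omega> \<in> space M. X 3 \<omega> \<le> z} \<in> sets M" by measurable
    show "\<And>B. B \<in> sets (PiM {1..2::nat} (\<lambda>_. borel)) \<Longrightarrow>
        emeasure M ({\<omega> \<in> space M. X 3 \<omega> \<le> z} \<inter> {\<omega> \<in> space M. Y \<omega> \<in> B})
        = ennreal (1 - unif_surv z) * emeasure M {\<omega> \<in> space M. Y \<omega> \<in> B}"
      unfolding Y_def by (rule X3_indep_events)
  qed
  then show ?thesis by (simp add: Y_def \<phi>_def)
qed

lemma laplace_X1_Fubini:
  "(\<integral>\<^sup>+\<omega>. ennreal (exp (- X 1 \<omega>)) \<partial>M) = (\<integral>\<^sup>+z. ennreal (exp (- z)) * ennreal (1 - unif_surv z) \<partial>lborel)"
proof -
  have "(\<integral>\<^sup>+\<omega>. ennreal (exp (- X 1 \<omega>)) \<partial>M) = (\<integral>\<^sup>+\<omega>. 1 * ennreal (exp (- X 1 \<omega>)) \<partial>M)"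
    by simp
  also have "\<dots> = (\<integral>\<^sup>+z. ennreal (exp (- z)) * (\<integral>\<^sup>+\<omega>. 1 * indicator {\<omega> \<in> space M. X 1 \<omega> \<le> z} \<omega> \<partial>M) \<partial>lborel)"
    by (rule nn_integral_exp_neg_Fubini) auto
  also have "\<dots> = (\<integral>\<^sup>+z. ennreal (exp (- z)) * ennreal (1 - unif_surv z) \<partial>lborel)"
  proof (intro nn_integral_cong)
    fix z :: real
    have "{\<omega> \<in> space M. X 1 \<omega> \<le> z} \<in> sets M" by measurable
    then show "ennreal (exp (- z)) * (\<integral>\<^sup>+\<omega>. 1 * indicator {\<omega> \<in> space M. X 1 \<omega> \<le> z} \<omega> \<partial>M)
        = ennreal (exp (- z)) * ennreal (1 - unif_surv z)"
      using uniform01_cdf[OF X_measurable X1_unif, of z] by (simp only: mult_1 nn_integral_indicator)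
  qed
  finally show ?thesis .
qed

text \<open>Renewal after the second repair: E e^-S_3 = E e^-X_1 \<cdot> E e^-S_2.\<close>
lemma laplace_S3:
  "(\<integral>\<^sup>+\<omega>. ennreal (exp (- (X 1 \<omega> + X 2 \<omega> + X 3 \<omega>))) \<partial>M)
   = (\<integral>\<^sup>+\<omega>. ennreal (exp (- X 1 \<omega>)) \<partial>M) * (\<integral>\<^sup>+\<omega>. ennreal (exp (- (X 1 \<omega> + X 2 \<omega>))) \<partial>M)"
proof -
  define L2 where "L2 = (\<integral>\<^sup>+\<omega>. ennreal (exp (- (X 1 \<omega> + X 2 \<omega>))) \<partial>M)"
  have "(\<integral>\<^sup>+\<omega>. ennreal (exp (- (X 1 \<omega> + X 2 \<omega> + X 3 \<omega>))) \<partial>M)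
      = (\<integral>\<^sup>+\<omega>. ennreal (exp (- (X 1 \<omega> + X 2 \<omega>))) * ennreal (exp (- X 3 \<omega>)) \<partial>M)"
    by (intro nn_integral_cong) (simp add: ennreal_mult'[symmetric] exp_add[symmetric])
  also have "\<dots> = (\<integral>\<^sup>+z. ennreal (exp (- z)) * (\<integral>\<^sup>+\<omega>. ennreal (exp (- (X 1 \<omega> + X 2 \<omega>)))
      * indicator {\<omega> \<in> space M. X 3 \<omega> \<le> z} \<omega> \<partial>M) \<partial>lborel)"
    by (rule nn_integral_exp_neg_Fubini) measurable
  also have "\<dots> = (\<integral>\<^sup>+z. ennreal (exp (- z)) * (ennreal (1 - unif_surv z) * L2) \<partial>lborel)"
    by (simp only: X3_indep_laplace L2_def)
  also have "\<dots> = (\<integral>\<^sup>+z. ennreal (exp (- z)) * ennreal (1 - unif_surv z) \<partial>lborel) * L2"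
    by (simp add: nn_integral_multc[symmetric] mult.assoc)
  finally show ?thesis unfolding laplace_X1_Fubini L2_def .
qed

text \<open>Integrating the tangent-line bound exp(-s) \<ge> (2 - s)/e at s = S_2, using
  E X_1 = 1/2 and E X_2 \<le> 1/3.\<close>
lemma laplace_S2_tangent:
  "ennreal (2 * exp (- 1)) \<le> (\<integral>\<^sup>+\<omega>. ennreal (exp (- (X 1 \<omega> + X 2 \<omega>))) \<partial>M)
     + ennreal (exp (- 1) * (1/2) + exp (- 1) * (1/3))"
proof -
  define L2 where "L2 = (\<integral>\<^sup>+\<omega>. ennreal (exp (- (X 1 \<omega> + X 2 \<omega>))) \<partial>M)"
  define c where "c = exp (- 1::real)"
  have tangent: "ennreal (2 * c) \<le> ennreal (exp (- (X 1 \<omega> + X 2 \<omega>))) + ennreal c * ennreal (X 1 \<omega>) + ennreal c * ennreal (X 2 \<omega>)" for \<omega>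
  proof -
    have "c * (2 - (X 1 \<omega> + X 2 \<omega>)) \<le> c * exp (1 - (X 1 \<omega> + X 2 \<omega>))"
      using exp_ge_add_one_self[of "1 - (X 1 \<omega> + X 2 \<omega>)"] by (intro mult_left_mono) (auto simp: c_def)
    also have "\<dots> = exp (- (X 1 \<omega> + X 2 \<omega>))" by (simp add: c_def exp_add[symmetric])
    finally show ?thesis using X_nonneg[of 1 \<omega>] X_nonneg[of 2 \<omega>]
      by (simp add: c_def algebra_simps ennreal_mult'[symmetric] ennreal_plus[symmetric] del: ennreal_plus)
  qed
  have "ennreal (2 * c) = (\<integral>\<^sup>+\<omega>. ennreal (2 * c) \<partial>M)" by (simp add: emeasure_space_1)
  also have "\<dots> \<le> (\<integral>\<^sup>+\<omega>. ennreal (exp (- (X 1 \<omega> + X 2 \<omega>)))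
      + ennreal c * ennreal (X 1 \<omega>) + ennreal c * ennreal (X 2 \<omega>) \<partial>M)"
    by (intro nn_integral_mono tangent)
  also have "\<dots> = L2 + ennreal c * (\<integral>\<^sup>+\<omega>. ennreal (X 1 \<omega>) \<partial>M) + ennreal c * (\<integral>\<^sup>+\<omega>. ennreal (X 2 \<omega>) \<partial>M)"
    unfolding L2_def by (simp add: nn_integral_add nn_integral_cmult)
  also have "\<dots> \<le> L2 + ennreal c * ennreal (1/2) + ennreal c * ennreal (1/3)"
    using uniform01_mean[OF X_measurable X1_unif] mean_X2_le by (intro add_mono mult_left_mono order_refl) auto
  also have "\<dots> = L2 + ennreal (c * (1/2) + c * (1/3))"
  proof -
    have c: "0 \<le> c" by (simp add: c_def)
    then have "ennreal (c * (1/2) + c * (1/3)) = ennreal (c * (1/2)) + ennreal (c * (1/3))"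
      by (intro ennreal_plus) simp_all
    also have "\<dots> = ennreal c * ennreal (1/2) + ennreal c * ennreal (1/3)"
      by (simp only: ennreal_mult'[OF c])
    finally show ?thesis by (simp only: add.assoc)
  qed
  finally show ?thesis unfolding L2_def c_def .
qed

lemma laplace_S2_lower:
  "ennreal (7/6 * exp (- 1)) \<le> (\<integral>\<^sup>+\<omega>. ennreal (exp (- (X 1 \<omega> + X 2 \<omega>))) \<partial>M)"
proof -
  define L2 where "L2 = (\<integral>\<^sup>+\<omega>. ennreal (exp (- (X 1 \<omega> + X 2 \<omega>))) \<partial>M)"
  have "L2 \<le> (\<integral>\<^sup>+\<omega>. 1 \<partial>M)"
    unfolding L2_def
  proof (intro nn_integral_mono)
    fix \<omega>
    have "0 \<le> X 1 \<omega> + X 2 \<omega>" by (simp add: X_nonneg add_nonneg_nonneg)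
    then show "ennreal (exp (- (X 1 \<omega> + X 2 \<omega>))) \<le> 1" by simp
  qed
  then have "L2 \<le> 1" by (simp add: emeasure_space_1)
  then obtain r where r: "L2 = ennreal r" "0 \<le> r"
    by (cases L2) (auto simp: top_unique)
  with laplace_S2_tangent have "2 * exp (- 1) \<le> r + (exp (- 1) * (1/2) + exp (- 1) * (1/3))"
    unfolding L2_def[symmetric] by (simp add: ennreal_plus[symmetric] ennreal_le_iff del: ennreal_plus)
  then show ?thesis unfolding L2_def[symmetric] r by (intro ennreal_leI) linarith
qed

lemma tail_prob_1_laplace: "ennreal (tail_prob 1) = (\<integral>\<^sup>+\<omega>. ennreal (exp (- X 1 \<omega>)) \<partial>M)"
  using tail_prob_laplace[of 1] by simp

lemma tail_prob_2_laplace: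
  "ennreal (tail_prob 2) = (\<integral>\<^sup>+\<omega>. ennreal (exp (- (X 1 \<omega> + X 2 \<omega>))) \<partial>M)"
proof -
  have "(\<Sum>i\<in>{1..2}. X i \<omega>) = X 1 \<omega> + X 2 \<omega>" for \<omega>
    by (simp add: numeral_2_eq_2)
  then show ?thesis using tail_prob_laplace[of 2] by simp
qed

lemma tail_prob_3_laplace:
  "ennreal (tail_prob 3) = (\<integral>\<^sup>+\<omega>. ennreal (exp (- (X 1 \<omega> + X 2 \<omega> + X 3 \<omega>))) \<partial>M)"
proof -
  have "(\<Sum>i\<in>{1..3}. X i \<omega>) = X 1 \<omega> + X 2 \<omega> + X 3 \<omega>" for \<omega>
    by (simp add: numeral_3_eq_3 numeral_2_eq_2)
  then show ?thesis using tail_prob_laplace[of 3] by simp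
qed

lemma tail_prob_1: "tail_prob 1 = 1 - exp (- 1)"
  using tail_prob_1_laplace uniform01_laplace[OF X_measurable X1_unif] by simp

lemma tail_prob_3: "tail_prob 3 = tail_prob 1 * tail_prob 2"
proof -
  have "ennreal (tail_prob 3) = ennreal (tail_prob 1) * ennreal (tail_prob 2)"
    by (simp only: tail_prob_1_laplace tail_prob_2_laplace tail_prob_3_laplace laplace_S3)
  also have "\<dots> = ennreal (tail_prob 1 * tail_prob 2)"
    by (rule ennreal_mult[symmetric]) simp_all
  finally show ?thesis by (subst (asm) ennreal_inj) simp_all
qed

lemma tail_prob_2: "7/6 * exp (- 1) \<le> tail_prob 2"
proof -
  have "ennreal (7/6 * exp (- 1)) \<le> ennreal (tail_prob 2)"
    unfolding tail_prob_2_laplace by (rule laplace_S2_lower)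
  then show ?thesis by (simp add: ennreal_le_iff)
qed

theorem tail_prob_not_log_convex: "(tail_prob 2)\<^sup>2 > tail_prob 1 * tail_prob 3"
proof -
  have "(tail_prob 1)\<^sup>2 < tail_prob 2"
    using one_minus_exp_neg1_sq_lt tail_prob_1 tail_prob_2 by simp
  moreover have "0 < tail_prob 2" using tail_prob_2 exp_gt_zero[of "- 1"] by linarith
  ultimately show ?thesis unfolding tail_prob_3
    by (simp add: power2_eq_square mult.assoc[symmetric])
qed

end

theorem mainTheorem6:
  fixes M :: "'a measure" and X :: "nat \<Rightarrow> 'a \<Rightarrow> real" and T :: "'a \<Rightarrow> real"
    and A :: "nat \<Rightarrow> real"
  assumes "prob_space M"
    and A1: "A 1 = 1" and A2: "A 2 = 0" and Anonneg: "\<forall>k. 0 \<le> A k"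
    and Xmeas: "\<forall>k. X k \<in> borel_measurable M"
    and Xnonneg: "\<forall>k \<omega>. 0 \<le> X k \<omega>"
    and X1unif: "distr M lborel (X 1) = uniform_measure lborel {0<..<1}"
    and Xcond: "\<forall>k\<ge>1. \<forall>z\<ge>0. \<forall>B \<in> sets (PiM {1..k} (\<lambda>_. borel)).
        measure M ({\<omega> \<in> space M. z < X (Suc k) \<omega>} \<inter>
                   {\<omega> \<in> space M. (\<lambda>i\<in>{1..k}. X i \<omega>) \<in> B})
        = integral\<^sup>L M (\<lambda>\<omega>. indicator {\<omega> \<in> space M. (\<lambda>i\<in>{1..k}. X i \<omega>) \<in> B} \<omega>
                            * cond_surv (surv M (X 1)) (virt_age A X k \<omega>) z)"
    and Texp: "distributed M lborel T (exponential_density 1)"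
    and Tindep: "\<forall>B \<in> sets borel. \<forall>C \<in> sets (PiM UNIV (\<lambda>_::nat. borel)).
        measure M ({\<omega> \<in> space M. T \<omega> \<in> B} \<inter> {\<omega> \<in> space M. (\<lambda>k. X k \<omega>) \<in> C})
        = measure M {\<omega> \<in> space M. T \<omega> \<in> B} * measure M {\<omega> \<in> space M. (\<lambda>k. X k \<omega>) \<in> C}"
  shows "IFR (surv M (X 1)) \<and> DFR (surv M T)
    \<and> \<not> discrete_DFR M (\<lambda>\<omega>. count_proc X (T \<omega>) \<omega>)
    \<and> (measure M {\<omega> \<in> space M. enat 2 \<le> count_proc X (T \<omega>) \<omega>})\<^sup>2 >
        measure M {\<omega> \<in> space M. enat 1 \<le> count_proc X (T \<omega>) \<omega>}
        * measure M {\<omega> \<in> space M. enat 3 \<le> count_proc X (T \<omega>) \<omega>}"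
proof -
  interpret prob_space M by (rule assms(1))
  interpret kijima_counterexample M X A T
  proof
    show "\<And>k. X k \<in> borel_measurable M" using Xmeas by blast
    show "\<And>k \<omega>. 0 \<le> X k \<omega>" using Xnonneg by blast
  qed (fact A1 A2 X1unif Xcond Texp Tindep)+
  have "\<not> discrete_DFR M (\<lambda>\<omega>. count_proc X (T \<omega>) \<omega>)"
  proof
    assume "discrete_DFR M (\<lambda>\<omega>. count_proc X (T \<omega>) \<omega>)"
    then have "(tail_prob (1 + 1))\<^sup>2 \<le> tail_prob 1 * tail_prob (1 + 2)"
      unfolding discrete_DFR_def by blast
    moreover have "(1::nat) + 2 = 3" by simp
    ultimately have "(tail_prob 2)\<^sup>2 \<le> tail_prob 1 * tail_prob 3" by (simp only: one_add_one)
    with tail_prob_not_log_convex show False by linarith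
  qed
  then show ?thesis using IFR_X1 DFR_T tail_prob_not_log_convex by blast
qed

end
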